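(* Let $\mathcal X$ be an Ahlfors $n$-regular space with $n>0$ and let $s\in(0,n)$. Then for every $u\in\dot{\mathcal B}^s_{n/s}(\mathcal X)$ there exists a set $F\subset\mathcal X$ such that $\mathcal X\setminus F$ has Hausdorff dimension zero and $\widetilde u(x)=\lim_{r\to0}\fint_{B(x,r)}u\,d\mu$ exists for all $x\in F$.
   Context: Metric measure space: $d$ metric, $\mu$ regular Borel, balls of finite positive measure; $\fint_Bu\,d\mu=\mu(B)^{-1}\int_Bu\,d\mu$. Ahlfors $n$-regular: $\mu(B(x,r))\sim r^n$ for all $x$, $0<r<2\operatorname{diam}\mathcal X$. $V(x,y)=\mu(B(x,d(x,y)))$; for $p\ge1$, $\dot{\mathcal B}^s_p(\mathcal X)$ is the set of $u\in L^p_{\rm loc}(\mathcal X)$ with $\int_{\mathcal X}\int_{\mathcal X}\frac{|u(x)-u(y)|^p}{d(x,y)^{sp}V(x,y)}d\mu(y)d\mu(x)<\infty$. *)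

theory Defs
  imports "HOL-Analysis.Analysis"
begin

definition mm_space :: "'a::metric_space measure \<Rightarrow> bool" where
  "mm_space \<mu> \<longleftrightarrow> sets \<mu> = sets borel
     \<and> (\<forall>A\<in>sets \<mu>. emeasure \<mu> A = (INF U\<in>{U. open U \<and> A \<subseteq> U}. emeasure \<mu> U))
     \<and> (\<forall>x r. r > 0 \<longrightarrow> 0 < emeasure \<mu> (ball x r) \<and> emeasure \<mu> (ball x r) < \<infinity>)"

definition ahlfors_regular :: "'a::metric_space measure \<Rightarrow> real \<Rightarrow> bool" where
  "ahlfors_regular \<mu> n \<longleftrightarrow> (\<exists>C\<ge>1. \<forall>x r. 0 < r \<and> (\<not> bounded (UNIV::'a set) \<or> r < 2 * diameter (UNIV::'a set))
      \<longrightarrow> r powr n / C \<le> measure \<mu> (ball x r) \<and> measure \<mu> (ball x r) \<le> C * r powr n)"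

definition V :: "'a::metric_space measure \<Rightarrow> 'a \<Rightarrow> 'a \<Rightarrow> real" where
  "V \<mu> x y = measure \<mu> (ball x (dist x y))"

definition Lp_loc :: "'a::metric_space measure \<Rightarrow> real \<Rightarrow> ('a \<Rightarrow> real) \<Rightarrow> bool" where
  "Lp_loc \<mu> p u \<longleftrightarrow> u \<in> borel_measurable \<mu> \<and>
     (\<forall>x r. r > 0 \<longrightarrow> (\<integral>\<^sup>+ y. ennreal (\<bar>u y\<bar> powr p) * indicator (ball x r) y \<partial>\<mu>) < \<infinity>)"

definition besov :: "'a::metric_space measure \<Rightarrow> real \<Rightarrow> real \<Rightarrow> ('a \<Rightarrow> real) set" where
  "besov \<mu> s p = {u. Lp_loc \<mu> p u \<and>
     (\<integral>\<^sup>+ x. (\<integral>\<^sup>+ y. ennreal (\<bar>u x - u y\<bar> powr p / (dist x y powr (s * p) * V \<mu> x y)) \<partial>\<mu>) \<partial>\<mu>) < \<infinity>}"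

definition ball_avg :: "'a::metric_space measure \<Rightarrow> ('a \<Rightarrow> real) \<Rightarrow> 'a \<Rightarrow> real \<Rightarrow> real" where
  "ball_avg \<mu> u x r = (LINT y:ball x r|\<mu>. u y) / measure \<mu> (ball x r)"

definition hausdorff_pre :: "real \<Rightarrow> real \<Rightarrow> 'a::metric_space set \<Rightarrow> ennreal" where
  "hausdorff_pre t \<delta> E = Inf {\<Sum>i. ennreal (diameter (C i) powr t) | C :: nat \<Rightarrow> 'a set.
      (\<forall>i. bounded (C i) \<and> diameter (C i) \<le> \<delta>) \<and> E \<subseteq> (\<Union>i. C i)}"

definition hausdorff_measure :: "real \<Rightarrow> 'a::metric_space set \<Rightarrow> ennreal" where
  "hausdorff_measure t E = (SUP \<delta>\<in>{0<..}. hausdorff_pre t \<delta> E)"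

definition hausdorff_dim_zero :: "'a::metric_space set \<Rightarrow> bool" where
  "hausdorff_dim_zero E \<longleftrightarrow> (\<forall>t>0. hausdorff_measure t E = 0)"

end

theory Submission
  imports Defs
begin

text \<open>
  Write
  \<open>E(x,r)\<close> for the Besov energy of \<open>u\<close> restricted to pairs in \<open>B(x,r) \<times> B(x,r)\<close> and
  \<open>r\<^sub>k = R\<^sub>0/2\<^sup>k\<close> for the dyadic scales.

  If \<open>E(x,r\<^sub>k) \<le> r\<^sub>k\<^sup>\<tau>\<close> for all large \<open>k\<close>, splitting pairs according to
  whether \<open>|u(y) - u(z)| \<le> r\<^sup>\<tau>\<^sup>/\<^sup>p\<close> shows that the ball averages vary by \<open>O(r\<^sub>k\<^sup>\<tau>\<^sup>/\<^sup>p)\<close> on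
  \<open>[r\<^sub>k/2, r\<^sub>k]\<close>; a geometric-series argument then gives the limit at \<open>0\<^sup>+\<close>.

  The points with \<open>E(x,r\<^sub>k) > r\<^sub>k\<^sup>\<tau>\<close> for infinitely many \<open>k\<close> are covered,
  for every \<open>K\<close>, by balls \<open>B(q,r\<^sub>k)\<close>, \<open>k \<ge> K\<close>, centred in maximal \<open>r\<^sub>k\<close>-separated nets.
  Bounded overlap of the doubled balls bounds their \<open>2\<tau>\<close>-content by \<open>O(2\<^sup>-\<^sup>K\<^sup>\<tau>)\<close> times
  the total energy, so these points are \<open>\<H>\<^sup>2\<^sup>\<tau>\<close>-null for every \<open>\<tau> > 0\<close>.
\<close>

text \<open>Super-additivity of the lower integral needs no measurability; this matters because
  the Besov kernel involves \<open>V(x,y) = \<mu>(B(x,d(x,y)))\<close>, whose joint measurability is not available.\<close>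
lemma nn_integral_superadd:
  "integral\<^sup>N M f + integral\<^sup>N M g \<le> (\<integral>\<^sup>+ x. f x + g x \<partial>M)"
proof -
  let ?A = "{a. simple_function M a \<and> a \<le> f}"
  let ?B = "{b. simple_function M b \<and> b \<le> g}"
  have ne: "?A \<noteq> {}" "?B \<noteq> {}" by (auto intro!: exI[of _ "\<lambda>_. 0"] simp: le_fun_def)
  have "integral\<^sup>N M f + integral\<^sup>N M g = (SUP a\<in>?A. SUP b\<in>?B. integral\<^sup>S M a + integral\<^sup>S M b)"
    unfolding nn_integral_def
    by (subst ennreal_SUP_add_left[symmetric, OF ne(1)]) (simp add: ennreal_SUP_add_right[OF ne(2)])
  also have "\<dots> \<le> (\<integral>\<^sup>+ x. f x + g x \<partial>M)"
  proof (intro SUP_least)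
    fix a b assume a: "a \<in> ?A" and b: "b \<in> ?B"
    then have "integral\<^sup>S M a + integral\<^sup>S M b = (\<integral>\<^sup>Sx. a x + b x \<partial>M)" by simp
    also have "\<dots> \<le> (\<integral>\<^sup>+ x. f x + g x \<partial>M)"
      unfolding nn_integral_def
      by (rule SUP_upper) (use a b in \<open>auto simp: le_fun_def intro: add_mono\<close>)
    finally show "integral\<^sup>S M a + integral\<^sup>S M b \<le> (\<integral>\<^sup>+ x. f x + g x \<partial>M)" .
  qed
  finally show ?thesis .
qed

lemma nn_integral_superadd_sum:
  assumes "finite Q"
  shows "(\<Sum>q\<in>Q. integral\<^sup>N M (f q)) \<le> (\<integral>\<^sup>+ x. (\<Sum>q\<in>Q. f q x) \<partial>M)"
  using assms
proof induct
  case (insert q Q)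
  have "(\<Sum>q\<in>insert q Q. integral\<^sup>N M (f q)) \<le> integral\<^sup>N M (f q) + (\<integral>\<^sup>+ x. (\<Sum>q\<in>Q. f q x) \<partial>M)"
    using insert by (auto intro: add_mono)
  also have "\<dots> \<le> (\<integral>\<^sup>+ x. f q x + (\<Sum>q\<in>Q. f q x) \<partial>M)" by (rule nn_integral_superadd)
  finally show ?case using insert by simp
qed simp

lemma nn_integral_cmult_le:
  fixes c :: ennreal
  assumes "c < \<infinity>"
  shows "(\<integral>\<^sup>+ x. c * f x \<partial>M) \<le> c * integral\<^sup>N M f"
proof (cases "c = 0")
  case False
  have cc: "c * inverse c = 1" using False assms ennreal_divide_self[of c]
    by (simp add: divide_ennreal_def)
  show ?thesis
    unfolding nn_integral_def[of M "\<lambda>x. c * f x"]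
  proof (intro SUP_least, clarify)
    fix s assume s: "simple_function M s" "s \<le> (\<lambda>x. c * f x)"
    define s' where "s' = (\<lambda>x. inverse c * s x)"
    have s_eq: "s = (\<lambda>x. c * s' x)" unfolding s'_def using cc by (simp add: mult.assoc[symmetric])
    have s': "simple_function M s'" unfolding s'_def using s(1) by auto
    have "s' x \<le> f x" for x
    proof -
      have "s' x \<le> inverse c * (c * f x)" using s(2) by (auto simp: s'_def le_fun_def intro: mult_left_mono)
      also have "\<dots> = f x" using cc by (simp add: mult.assoc[symmetric] mult.commute)
      finally show ?thesis .
    qed
    then have "integral\<^sup>S M s' \<le> integral\<^sup>N M f"
      using s' by (auto simp: nn_integral_def le_fun_def intro!: SUP_upper)
    then show "integral\<^sup>S M s \<le> c * integral\<^sup>N M f"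
      using s' by (subst s_eq) (simp add: mult_left_mono)
  qed
qed simp

lemma geometric_tail_bound:
  fixes \<theta> :: real
  assumes "finite S" "S \<subseteq> {K..}" "0 \<le> \<theta>" "\<theta> < 1"
  shows "(\<Sum>k\<in>S. \<theta>^k) \<le> \<theta>^K / (1 - \<theta>)"
proof -
  have inj: "inj_on (\<lambda>k. k - K) S"
    using assms(2) unfolding inj_on_def by (metis atLeast_iff le_add_diff_inverse subsetD)
  have "(\<Sum>k\<in>S. \<theta>^k) = \<theta>^K * (\<Sum>k\<in>S. \<theta>^(k - K))"
    using assms(2) by (auto simp: sum_distrib_left power_add[symmetric] intro!: sum.cong)
  also have "(\<Sum>k\<in>S. \<theta>^(k - K)) = (\<Sum>j\<in>(\<lambda>k. k - K) ` S. \<theta>^j)"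
    using sum.reindex[OF inj, of "\<lambda>j. \<theta>^j"] by simp
  also have "\<dots> \<le> (\<Sum>j. \<theta>^j)"
    using assms by (intro sum_le_suminf summable_geometric) auto
  also have "\<dots> = 1 / (1 - \<theta>)" using assms by (intro suminf_geometric) auto
  finally show ?thesis using assms by (simp add: divide_simps mult_left_mono)
qed

text \<open>Chebyshev-type estimate: if \<open>a > \<lambda>\<close> then \<open>a \<le> a\<^sup>p / \<lambda>\<^sup>p\<^sup>-\<^sup>1\<close>; with an extra
  denominator \<open>D \<le> K\<close> this is how large differences are dominated by the Besov kernel.\<close>
lemma above_threshold_le_power:
  fixes a l p D K :: real
  assumes "0 < l" "l < a" "1 < p" "0 < D" "D \<le> K"
  shows "a \<le> K / l powr (p - 1) * (a powr p / D)"
proof -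
  have a0: "0 < a" using assms by simp
  have "a * l powr (p - 1) \<le> a * a powr (p - 1)"
    using assms by (intro mult_left_mono powr_mono2) auto
  also have "\<dots> = a powr p" using a0 by (simp add: powr_mult_base)
  finally have "a \<le> a powr p / l powr (p - 1)" using assms by (simp add: field_simps)
  also have "\<dots> \<le> K / l powr (p - 1) * (a powr p / D)"
    using assms a0 by (simp add: field_simps mult_left_mono)
  finally show ?thesis .
qed

lemma half_powr_bounds: "0 < t \<Longrightarrow> 0 \<le> (1/2::real) powr t \<and> (1/2::real) powr t < 1"
  using powr_less_mono2[of t "1/2" 1] by auto

definition dyadic :: "real \<Rightarrow> nat \<Rightarrow> real" where
  "dyadic R k = R / 2 ^ k"

lemma dyadic_pos: "0 < R \<Longrightarrow> 0 < dyadic R k"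
  by (simp add: dyadic_def)

lemma dyadic_Suc: "dyadic R (Suc k) = dyadic R k / 2"
  by (simp add: dyadic_def)

lemma dyadic_antimono: "0 \<le> R \<Longrightarrow> i \<le> j \<Longrightarrow> dyadic R j \<le> dyadic R i"
  unfolding dyadic_def by (intro divide_left_mono) (auto intro: power_increasing)

lemma dyadic_le: "0 \<le> R \<Longrightarrow> dyadic R k \<le> R"
  using dyadic_antimono[of R 0 k] by (simp add: dyadic_def)

lemma dyadic_powr: "0 \<le> R \<Longrightarrow> dyadic R k powr t = R powr t * ((1/2) powr t) ^ k"
  by (simp add: dyadic_def powr_divide powr_power powr_realpow[symmetric] powr_powr
      field_simps)

lemma dyadic_tendsto_zero: "dyadic R \<longlonglongrightarrow> 0"
proof -
  have "(\<lambda>k. R * (1/2) ^ k) \<longlonglongrightarrow> R * 0" by (intro tendsto_mult_left LIMSEQ_power_zero) simp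
  then show ?thesis by (simp add: dyadic_def[abs_def] field_simps)
qed

lemma dyadic_bracket:
  assumes "0 < R" "0 < \<rho>" "\<rho> < dyadic R k1"
  shows "\<exists>k\<ge>k1. dyadic R (Suc k) < \<rho> \<and> \<rho> \<le> dyadic R k"
proof -
  have ex: "\<exists>j. dyadic R j < \<rho>"
    using order_tendstoD(2)[OF dyadic_tendsto_zero assms(2)] by (auto simp: eventually_sequentially)
  define j0 where "j0 = (LEAST j. dyadic R j < \<rho>)"
  have j0: "dyadic R j0 < \<rho>" unfolding j0_def by (rule LeastI_ex[OF ex])
  have "k1 < j0"
    using dyadic_antimono[of R j0 k1] assms j0 by (cases "k1 < j0") auto
  then obtain k where k: "j0 = Suc k" "k1 \<le> k" by (cases j0) auto
  have "\<not> dyadic R k < \<rho>" using not_less_Least[of k "\<lambda>j. dyadic R j < \<rho>"] k unfolding j0_def by simp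
  then show ?thesis using k j0 by (intro exI[of _ k]) auto
qed

lemma geometric_increments_bound:
  fixes b :: "nat \<Rightarrow> real"
  assumes \<theta>: "0 \<le> \<theta>" "\<theta> < 1" and D: "0 \<le> D"
    and step: "\<And>j. J \<le> j \<Longrightarrow> \<bar>b (Suc j) - b j\<bar> \<le> D * \<theta>^j"
    and k: "J \<le> k" "k \<le> m"
  shows "\<bar>b m - b k\<bar> \<le> D * \<theta>^k / (1 - \<theta>)"
proof -
  have "\<bar>b m - b k\<bar> \<le> D * (\<Sum>j\<in>{k..<m}. \<theta>^j)"
    using k(2)
  proof (induction m rule: dec_induct)
    case (step m)
    have "\<bar>b (Suc m) - b k\<bar> \<le> \<bar>b (Suc m) - b m\<bar> + \<bar>b m - b k\<bar>" by simp
    also have "\<dots> \<le> D * \<theta>^m + D * (\<Sum>j\<in>{k..<m}. \<theta>^j)"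
      using step assms(4)[of m] k(1) by (intro add_mono) auto
    finally show ?case using step.hyps(1) by (simp add: algebra_simps)
  qed simp
  also have "\<dots> \<le> D * (\<theta>^k / (1 - \<theta>))"
    using D \<theta> by (intro mult_left_mono geometric_tail_bound) auto
  finally show ?thesis by simp
qed

lemma geometric_increments_converge:
  fixes b :: "nat \<Rightarrow> real"
  assumes \<theta>: "0 \<le> \<theta>" "\<theta> < 1" and D: "0 \<le> D"
    and step: "\<And>k. K0 \<le> k \<Longrightarrow> \<bar>b (Suc k) - b k\<bar> \<le> D * \<theta>^k"
  shows "\<exists>L. b \<longlonglongrightarrow> L \<and> (\<forall>k\<ge>K0. \<bar>b k - L\<bar> \<le> D * \<theta>^k / (1 - \<theta>))"
proof -
  have chain: "\<bar>b m - b k\<bar> \<le> D * \<theta>^k / (1 - \<theta>)" if "K0 \<le> k" "k \<le> m" for k m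
    by (rule geometric_increments_bound[where J = K0, OF \<theta> D step that])
  have small: "\<exists>M\<ge>K0. D * \<theta>^M / (1 - \<theta>) < e" if "0 < e" for e
  proof -
    have "(\<lambda>M. D / (1 - \<theta>) * \<theta>^M) \<longlonglongrightarrow> D / (1 - \<theta>) * 0"
      by (intro tendsto_mult_left LIMSEQ_power_zero) (use \<theta> in simp)
    from order_tendstoD(2)[OF this] that obtain M where "\<forall>m\<ge>M. D / (1 - \<theta>) * \<theta>^m < e"
      by (auto simp: eventually_sequentially)
    then show ?thesis by (intro exI[of _ "max M K0"]) auto
  qed
  have "Cauchy b"
  proof (rule CauchyI)
    fix e :: real assume "0 < e"
    then obtain M where M: "M \<ge> K0" "D * \<theta>^M / (1 - \<theta>) < e / 2" using small[of "e / 2"] by auto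
    have "\<bar>b m - b n\<bar> < e" if "M \<le> m" "M \<le> n" for m n
      using chain[of M m] chain[of M n] M that by linarith
    then show "\<exists>M. \<forall>m\<ge>M. \<forall>n\<ge>M. norm (b m - b n) < e" by auto
  qed
  then obtain L where bL: "b \<longlonglongrightarrow> L" by (auto simp: Cauchy_convergent_iff convergent_def)
  have "\<bar>b k - L\<bar> \<le> D * \<theta>^k / (1 - \<theta>)" if "K0 \<le> k" for k
  proof -
    have "(\<lambda>m. \<bar>b m - b k\<bar>) \<longlonglongrightarrow> \<bar>L - b k\<bar>" by (intro tendsto_intros bL)
    then have "\<bar>L - b k\<bar> \<le> D * \<theta>^k / (1 - \<theta>)"
      by (rule LIMSEQ_le_const2) (use chain that in auto)
    then show ?thesis by (simp add: abs_minus_commute)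
  qed
  with bL show ?thesis by blast
qed

text \<open>If \<open>f\<close> oscillates by at most \<open>D \<theta>\<^sup>k\<close> on each dyadic interval \<open>[r\<^sub>k/2, r\<^sub>k]\<close>, then \<open>f\<close>
  has a limit at \<open>0\<^sup>+\<close>: the values \<open>f(r\<^sub>k)\<close> form a Cauchy sequence, and every small \<open>\<rho>\<close> is
  close to some \<open>r\<^sub>k\<close>.\<close>
lemma dyadic_limit_at_right:
  fixes f :: "real \<Rightarrow> real"
  assumes R: "0 < R" and \<theta>: "0 \<le> \<theta>" "\<theta> < 1" and D: "0 \<le> D"
    and osc: "\<And>k \<rho>. K0 \<le> k \<Longrightarrow> dyadic R k / 2 \<le> \<rho> \<Longrightarrow> \<rho> \<le> dyadic R k
                \<Longrightarrow> \<bar>f \<rho> - f (dyadic R k)\<bar> \<le> D * \<theta>^k"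
  shows "\<exists>L. (f \<longlongrightarrow> L) (at_right 0)"
proof -
  have "\<bar>f (dyadic R (Suc k)) - f (dyadic R k)\<bar> \<le> D * \<theta>^k" if "K0 \<le> k" for k
    using osc[OF that] dyadic_pos[OF R, of k] by (simp add: dyadic_Suc)
  from geometric_increments_converge[OF \<theta> D this] obtain L where
    L: "\<And>k. K0 \<le> k \<Longrightarrow> \<bar>f (dyadic R k) - L\<bar> \<le> D * \<theta>^k / (1 - \<theta>)" by blast
  define \<epsilon> where "\<epsilon> k = D * \<theta>^k + D * \<theta>^k / (1 - \<theta>)" for k
  have \<epsilon>_mono: "\<epsilon> k \<le> \<epsilon> k1" if "k1 \<le> k" for k k1
    unfolding \<epsilon>_def using that D \<theta>
    by (intro add_mono mult_left_mono divide_right_mono power_decreasing) auto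
  have "\<epsilon> \<longlonglongrightarrow> D * 0 + D * 0 / (1 - \<theta>)"
    unfolding \<epsilon>_def by (intro tendsto_intros LIMSEQ_power_zero) (use \<theta> in auto)
  then have \<epsilon>0: "\<epsilon> \<longlonglongrightarrow> 0" by simp
  have "(f \<longlongrightarrow> L) (at_right 0)"
  proof (rule tendstoI)
    fix e :: real assume "0 < e"
    from order_tendstoD(2)[OF \<epsilon>0 this] obtain k1 where k1: "k1 \<ge> K0" "\<epsilon> k1 < e"
      by (metis eventually_sequentially max.cobounded1 max.cobounded2)
    show "eventually (\<lambda>\<rho>. dist (f \<rho>) L < e) (at_right 0)"
      unfolding eventually_at_right_field
    proof (intro exI[of _ "dyadic R k1"] conjI allI impI)
      fix \<rho> :: real assume "0 < \<rho>" "\<rho> < dyadic R k1"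
      from dyadic_bracket[OF R this] obtain k where
        k: "k \<ge> k1" "dyadic R (Suc k) < \<rho>" "\<rho> \<le> dyadic R k" by blast
      have "dist (f \<rho>) L \<le> \<bar>f \<rho> - f (dyadic R k)\<bar> + \<bar>f (dyadic R k) - L\<bar>"
        by (simp add: dist_real_def)
      also have "\<dots> \<le> \<epsilon> k"
        unfolding \<epsilon>_def using osc[of k \<rho>] L[of k] k k1 by (intro add_mono) (auto simp: dyadic_Suc)
      also have "\<dots> < e" using \<epsilon>_mono[OF k(1)] k1(2) by simp
      finally show "dist (f \<rho>) L < e" .
    qed (use R dyadic_pos in auto)
  qed
  then show ?thesis by blast
qed

lemma diameter_ball_le:
  fixes q :: "'a::metric_space"
  assumes "0 \<le> r"
  shows "diameter (ball q r) \<le> 2 * r"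
proof (cases "ball q r = {}")
  case False
  have "dist x y \<le> 2 * r" if "x \<in> ball q r" "y \<in> ball q r" for x y
    using that dist_triangle3[of x y q] by simp
  then show ?thesis
    using False unfolding diameter_def by (auto intro!: cSUP_least)
qed (use assms in simp)

text \<open>A maximal \<open>r\<close>-separated set (obtained from Zorn's lemma) is an \<open>r\<close>-net.\<close>
lemma separated_net_exists:
  fixes r :: real
  assumes "0 < r"
  shows "\<exists>N::'a::metric_space set. (\<forall>p\<in>N. \<forall>q\<in>N. p \<noteq> q \<longrightarrow> r \<le> dist p q) \<and> (\<forall>x. \<exists>q\<in>N. dist x q < r)"
proof -
  define A where "A = {S::'a set. \<forall>p\<in>S. \<forall>q\<in>S. p \<noteq> q \<longrightarrow> r \<le> dist p q}"
  have "\<Union>Ch \<in> A" if Ch: "Ch \<in> chains A" for Ch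
  proof -
    have "r \<le> dist p q" if "S1 \<in> Ch" "S2 \<in> Ch" "p \<in> S1" "q \<in> S2" "p \<noteq> q" for S1 S2 p q
      using chainsD[OF Ch that(1,2)] chainsD2[OF Ch] that unfolding A_def by blast
    then show ?thesis unfolding A_def by blast
  qed
  from Zorn_Lemma[OF ballI[OF this]] obtain M where M: "M \<in> A" "\<forall>X\<in>A. M \<subseteq> X \<longrightarrow> X = M"
    by blast
  have "\<exists>q\<in>M. dist x q < r" for x
  proof (rule ccontr)
    assume "\<not> ?thesis"
    then have far: "\<forall>q\<in>M. r \<le> dist x q" by (auto simp: not_less)
    then have "x \<notin> M" using assms by force
    have "insert x M \<in> A"
      using M(1) far unfolding A_def by (auto simp: dist_commute)
    with M(2) \<open>x \<notin> M\<close> show False by blast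
  qed
  with M(1) show ?thesis unfolding A_def by blast
qed

lemma hausdorff_pre_le_countable_cover:
  fixes B :: "'i \<Rightarrow> 'a::metric_space set" and c :: ennreal
  assumes P: "countable P" and cover: "A \<subseteq> (\<Union>j\<in>P. B j)" and \<delta>: "0 \<le> \<delta>"
    and small: "\<And>j. j \<in> P \<Longrightarrow> bounded (B j) \<and> diameter (B j) \<le> \<delta>"
    and sums: "\<And>F. finite F \<Longrightarrow> F \<subseteq> P \<Longrightarrow> (\<Sum>j\<in>F. ennreal (diameter (B j) powr t)) \<le> c"
  shows "hausdorff_pre t \<delta> A \<le> c"
proof -
  define idx where "idx = to_nat_on P"
  define Cv where "Cv i = (if i \<in> idx ` P then B (from_nat_into P i) else {})" for i
  have idx_inv: "from_nat_into P (idx j) = j" if "j \<in> P" for j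
    unfolding idx_def using P that by simp
  have "A \<subseteq> (\<Union>i. Cv i)"
    using cover idx_inv by (force simp: Cv_def)
  moreover have "bounded (Cv i) \<and> diameter (Cv i) \<le> \<delta>" for i
    using small idx_inv \<delta> by (auto simp: Cv_def)
  ultimately have "hausdorff_pre t \<delta> A \<le> (\<Sum>i. ennreal (diameter (Cv i) powr t))"
    unfolding hausdorff_pre_def by (intro Inf_lower) blast
  also have "\<dots> \<le> c"
  proof (rule suminf_le_const[OF summableI])
    fix m
    define J where "J = {..<m} \<inter> idx ` P"
    have inj: "inj_on (from_nat_into P) J" unfolding J_def inj_on_def using idx_inv by auto
    have "(\<Sum>i<m. ennreal (diameter (Cv i) powr t)) = (\<Sum>i\<in>J. ennreal (diameter (Cv i) powr t))"
      unfolding J_def by (intro sum.mono_neutral_right) (auto simp: Cv_def)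
    also have "\<dots> = (\<Sum>j\<in>from_nat_into P ` J. ennreal (diameter (B j) powr t))"
      by (subst sum.reindex[OF inj]) (auto simp: Cv_def J_def)
    also have "\<dots> \<le> c" by (rule sums) (auto simp: J_def idx_inv)
    finally show "(\<Sum>i<m. ennreal (diameter (Cv i) powr t)) \<le> c" .
  qed
  finally show ?thesis .
qed

lemma hausdorff_measure_eq_zeroI:
  assumes "\<And>\<delta>. 0 < \<delta> \<Longrightarrow> hausdorff_pre t \<delta> A = 0"
  shows "hausdorff_measure t A = 0"
  unfolding hausdorff_measure_def using assms by (simp add: SUP_eq_iff)

lemma hausdorff_measure_empty: "hausdorff_measure t ({}::'a::metric_space set) = 0"
proof (rule hausdorff_measure_eq_zeroI)
  fix \<delta> :: real assume "0 < \<delta>"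
  then have "hausdorff_pre t \<delta> ({}::'a set) \<le> 0"
    by (intro hausdorff_pre_le_countable_cover[where P = "{}::nat set" and B = "\<lambda>_. {}"]) auto
  then show "hausdorff_pre t \<delta> ({}::'a set) = 0" by simp
qed

lemma ennreal_eq_zero_if_eventually_le:
  fixes x :: ennreal and a :: "nat \<Rightarrow> real"
  assumes le: "eventually (\<lambda>K. x \<le> ennreal (a K)) sequentially" and a: "a \<longlonglongrightarrow> 0"
  shows "x = 0"
proof -
  have "x \<le> 0 + ennreal e" if "0 < e" for e
  proof -
    from eventually_conj[OF le order_tendstoD(2)[OF a that]] obtain K where
      "x \<le> ennreal (a K)" "a K < e" by (auto simp: eventually_sequentially)
    then show ?thesis by (simp add: order_trans ennreal_leI)
  qed
  then show ?thesis by (metis ennreal_le_epsilon le_zero_eq)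
qed

definition besov_kernel :: "'a::metric_space measure \<Rightarrow> ('a \<Rightarrow> real) \<Rightarrow> real \<Rightarrow> real \<Rightarrow> 'a \<Rightarrow> 'a \<Rightarrow> real" where
  "besov_kernel \<mu> u p s y z = \<bar>u y - u z\<bar> powr p / (dist y z powr (s * p) * V \<mu> y z)"

definition ball_energy :: "'a::metric_space measure \<Rightarrow> ('a \<Rightarrow> real) \<Rightarrow> real \<Rightarrow> real \<Rightarrow> 'a \<Rightarrow> real \<Rightarrow> ennreal" where
  "ball_energy \<mu> u p s x r = (\<integral>\<^sup>+ y. \<integral>\<^sup>+ z. ennreal (besov_kernel \<mu> u p s y z)
      * indicator (ball x r) y * indicator (ball x r) z \<partial>\<mu> \<partial>\<mu>)"

text \<open>The kernel is nonnegative (with \<open>x / 0 = 0\<close> on the diagonal).\<close>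
lemma besov_kernel_nonneg: "0 \<le> besov_kernel \<mu> u p s y z"
  unfolding besov_kernel_def V_def by (intro divide_nonneg_nonneg mult_nonneg_nonneg) auto

lemma ball_energy_mono:
  assumes "ball x r \<subseteq> ball q r'"
  shows "ball_energy \<mu> u p s x r \<le> ball_energy \<mu> u p s q r'"
  unfolding ball_energy_def
  using assms by (intro nn_integral_mono mult_mono) (auto simp: indicator_def)

lemma ball_energy_recentre:
  assumes "dist x q < r"
  shows "ball_energy \<mu> u p s x r \<le> ball_energy \<mu> u p s q (2 * r)"
proof (rule ball_energy_mono, rule subsetI)
  fix z assume "z \<in> ball x r"
  then have "dist x z < r" by simp
  moreover have "dist q z \<le> dist q x + dist x z" by (rule dist_triangle)
  ultimately show "z \<in> ball q (2 * r)" using assms by (simp add: dist_commute)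
qed

lemma diameter_ball_powr_le_energy:
  fixes e :: ennreal and q :: "'a::metric_space"
  assumes "0 < r" "0 < \<tau>" "ennreal (r powr \<tau>) < e"
  shows "ennreal (diameter (ball q r) powr (2*\<tau>)) \<le> ennreal (2 powr (2*\<tau>) * r powr \<tau>) * e"
proof -
  have "diameter (ball q r) powr (2*\<tau>) \<le> (2 * r) powr (2*\<tau>)"
    using assms diameter_ball_le[of r q] diameter_ge_0[of "ball q r"] by (intro powr_mono2) auto
  also have "\<dots> = 2 powr (2*\<tau>) * r powr \<tau> * r powr \<tau>"
    using assms by (simp add: powr_mult powr_add[symmetric])
  finally have "ennreal (diameter (ball q r) powr (2*\<tau>)) \<le> ennreal (2 powr (2*\<tau>) * r powr \<tau>) * ennreal (r powr \<tau>)"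
    by (simp add: ennreal_mult[symmetric])
  also have "\<dots> \<le> ennreal (2 powr (2*\<tau>) * r powr \<tau>) * e"
    using assms by (intro mult_left_mono) auto
  finally show ?thesis .
qed

lemma balls_exhaust: "(\<Union>m::nat. ball x0 (real m + 1)) = (UNIV :: 'a::metric_space set)"
proof (intro equalityI subsetI)
  fix y :: 'a
  obtain m :: nat where "dist x0 y < real m" using reals_Archimedean2 by blast
  then have "y \<in> ball x0 (real m + 1)" by simp
  then show "y \<in> (\<Union>m::nat. ball x0 (real m + 1))" by blast
qed simp

locale local_ahlfors_regular =
  fixes \<mu> :: "'a::metric_space measure" and C R0 n :: real
  assumes sets_mu: "sets \<mu> = sets borel"
    and finite_ball: "\<And>x r. r > 0 \<Longrightarrow> emeasure \<mu> (ball x r) < \<infinity>"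
    and C1: "C \<ge> 1" and R0: "0 < R0" and npos: "n > 0"
    and lower: "\<And>x r. 0 < r \<Longrightarrow> r \<le> 4*R0 \<Longrightarrow> r powr n / C \<le> measure \<mu> (ball x r)"
    and upper: "\<And>x r. 0 < r \<Longrightarrow> r \<le> 4*R0 \<Longrightarrow> measure \<mu> (ball x r) \<le> C * r powr n"
begin

lemma space_mu[simp]: "space \<mu> = UNIV"
  using sets_eq_imp_space_eq[OF sets_mu] by simp

lemma sets_mu_borel[measurable_cong]: "sets \<mu> = sets borel"
  by (rule sets_mu)

lemma ball_sets[measurable]: "ball x r \<in> sets \<mu>"
  using sets_mu by simp

lemma ball_fmeasurable: "r > 0 \<Longrightarrow> ball x r \<in> fmeasurable \<mu>"
  using finite_ball by (intro fmeasurableI) auto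

lemma measure_ball_pos: "0 < r \<Longrightarrow> r \<le> 4*R0 \<Longrightarrow> 0 < measure \<mu> (ball x r)"
  using lower[of r x] C1 by (smt (verit) divide_pos_pos powr_gt_zero)

text \<open>Exhaustion by balls of finite measure makes \<open>\<mu>\<close> \<open>\<sigma>\<close>-finite, which gives
  measurability of inner integrals of jointly measurable functions.\<close>
lemma sigma_finite: "sigma_finite_measure \<mu>"
proof
  fix x0 :: 'a
  show "\<exists>A. countable A \<and> A \<subseteq> sets \<mu> \<and> \<Union> A = space \<mu> \<and> (\<forall>a\<in>A. emeasure \<mu> a \<noteq> \<infinity>)"
  proof (intro exI[of _ "range (\<lambda>m::nat. ball x0 (real m + 1))"] conjI)
    show "\<forall>a\<in>range (\<lambda>m::nat. ball x0 (real m + 1)). emeasure \<mu> a \<noteq> \<infinity>"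
      using finite_ball by (auto simp: less_top)
    show "\<Union> (range (\<lambda>m::nat. ball x0 (real m + 1))) = space \<mu>"
      using balls_exhaust[of x0] by simp
  qed auto
qed

text \<open>Disjoint balls of radius \<open>r/2\<close> around an \<open>r\<close>-separated set each have measure
  \<open>\<ge> (r/2)^n/C\<close>; this bounds the number of separated points in a ball.\<close>
lemma card_separated_le:
  assumes "finite S" "S \<subseteq> ball y R" "\<And>p q. p\<in>S \<Longrightarrow> q\<in>S \<Longrightarrow> p \<noteq> q \<Longrightarrow> r \<le> dist p q"
    "0 < r" "r \<le> 8*R0"
  shows "real (card S) * ((r/2) powr n / C) \<le> measure \<mu> (ball y (R + r/2))"
proof (cases "S = {}")
  case False
  then obtain q where "q \<in> S" by auto
  then have "dist y q < R" using assms(2) by auto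
  then have R: "0 < R" using zero_le_dist[of y q] by linarith
  have disj: "disjoint_family_on (\<lambda>q. ball q (r/2)) S"
    unfolding disjoint_family_on_def
  proof (intro ballI impI)
    fix p q assume pq: "p \<in> S" "q \<in> S" "p \<noteq> q"
    have "\<not> dist p z < r/2 \<or> \<not> dist q z < r/2" for z
      using assms(3)[OF pq] dist_triangle3[of p q z] dist_commute[of z p] dist_commute[of z q]
      by linarith
    then show "ball p (r/2) \<inter> ball q (r/2) = {}" by auto
  qed
  have "real (card S) * ((r/2) powr n / C) = (\<Sum>q\<in>S. (r/2) powr n / C)" by simp
  also have "\<dots> \<le> (\<Sum>q\<in>S. measure \<mu> (ball q (r/2)))"
    by (intro sum_mono lower) (use assms in auto)
  also have "\<dots> = measure \<mu> (\<Union>q\<in>S. ball q (r/2))"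
    by (rule measure_finite_Union[symmetric]) (use assms disj finite_ball in \<open>auto simp: less_top\<close>)
  also have "\<dots> \<le> measure \<mu> (ball y (R + r/2))"
  proof (rule measure_mono_fmeasurable)
    show "(\<Union>q\<in>S. ball q (r/2)) \<subseteq> ball y (R + r/2)"
    proof clarify
      fix q z assume "q \<in> S" "z \<in> ball q (r/2)"
      then have "dist y q < R" "dist q z < r/2" using assms(2) by auto
      then show "z \<in> ball y (R + r/2)" using dist_triangle[of y z q] by simp
    qed
    show "(\<Union>q\<in>S. ball q (r/2)) \<in> sets \<mu>" using assms(1) by (auto intro: sets.finite_UN)
    show "ball y (R + r/2) \<in> fmeasurable \<mu>" using R assms(4) by (intro ball_fmeasurable) simp
  qed
  finally show ?thesis .
qed simp

lemma separated_finite: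
  fixes S :: "'a set"
  assumes "S \<subseteq> ball y R" "\<And>p q. p\<in>S \<Longrightarrow> q\<in>S \<Longrightarrow> p \<noteq> q \<Longrightarrow> r \<le> dist p q"
    "0 < r" "r \<le> 8*R0"
  shows "finite S"
proof -
  define m where "m = measure \<mu> (ball y (R + r/2))"
  have c: "0 < (r/2) powr n / C" using assms(3) C1 by simp
  have "finite S \<and> card S \<le> nat \<lceil>m / ((r/2) powr n / C)\<rceil>"
  proof (rule finite_if_finite_subsets_card_bdd)
    fix G assume G: "G \<subseteq> S" "finite G"
    have "real (card G) * ((r/2) powr n / C) \<le> m"
      unfolding m_def
    proof (rule card_separated_le)
      show "G \<subseteq> ball y R" using G assms by blast
      show "\<And>p q. p\<in>G \<Longrightarrow> q\<in>G \<Longrightarrow> p \<noteq> q \<Longrightarrow> r \<le> dist p q"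
        using G assms(2) by blast
    qed (use G assms in auto)
    then show "card G \<le> nat \<lceil>m / ((r/2) powr n / C)\<rceil>"
      by (simp only: pos_le_divide_eq[OF c, symmetric]) linarith
  qed
  then show ?thesis by simp
qed

lemma separated_countable:
  fixes N :: "'a set"
  assumes "\<And>p q. p\<in>N \<Longrightarrow> q\<in>N \<Longrightarrow> p \<noteq> q \<Longrightarrow> r \<le> dist p q" "0 < r" "r \<le> 8*R0"
  shows "countable N"
proof (cases "N = {}")
  case False
  then obtain x0 where "x0 \<in> N" by auto
  have "N = (\<Union>m::nat. N \<inter> ball x0 (real m + 1))"
    using balls_exhaust[of x0] by blast
  moreover have "finite (N \<inter> ball x0 (real m + 1))" for m :: nat
    using assms by (intro separated_finite[of _ x0 "real m + 1" r]) auto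
  ultimately show ?thesis by (metis countable_UN countable_finite countableI_type)
qed simp

lemma dyadic_nets:
  obtains N :: "nat \<Rightarrow> 'a set" where
    "\<And>k p q. p \<in> N k \<Longrightarrow> q \<in> N k \<Longrightarrow> p \<noteq> q \<Longrightarrow> dyadic R0 k \<le> dist p q"
    "\<And>k x. \<exists>q\<in>N k. dist x q < dyadic R0 k" "\<And>k. countable (N k)"
proof -
  have "\<forall>k. \<exists>N::'a set. (\<forall>p\<in>N. \<forall>q\<in>N. p \<noteq> q \<longrightarrow> dyadic R0 k \<le> dist p q)
      \<and> (\<forall>x. \<exists>q\<in>N. dist x q < dyadic R0 k)"
    by (intro allI separated_net_exists dyadic_pos R0)
  from choice[OF this] obtain N :: "nat \<Rightarrow> 'a set" where
    N: "\<forall>k. (\<forall>p\<in>N k. \<forall>q\<in>N k. p \<noteq> q \<longrightarrow> dyadic R0 k \<le> dist p q)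
      \<and> (\<forall>x. \<exists>q\<in>N k. dist x q < dyadic R0 k)" ..
  have sep: "dyadic R0 k \<le> dist p q" if "p \<in> N k" "q \<in> N k" "p \<noteq> q" for k p q
    using conjunct1[OF spec[OF N, of k]] that by simp
  have net: "\<exists>q\<in>N k. dist x q < dyadic R0 k" for k x
    using conjunct2[OF spec[OF N, of k]] by simp
  have count: "countable (N k)" for k
  proof (rule separated_countable)
    show "0 < dyadic R0 k" by (rule dyadic_pos[OF R0])
    show "dyadic R0 k \<le> 8*R0" using dyadic_le[of R0 k] R0 by simp
  qed (fact sep)
  show ?thesis by (rule that[OF sep net count])
qed

lemma card_overlap_le:
  fixes Q :: "'a set"
  assumes "finite Q" "\<And>p q. p\<in>Q \<Longrightarrow> q\<in>Q \<Longrightarrow> p \<noteq> q \<Longrightarrow> r \<le> dist p q" "0 < r" "r \<le> R0"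
  shows "real (card {q\<in>Q. y \<in> ball q (2*r)}) \<le> C^2 * 5 powr n"
proof -
  let ?Q = "{q\<in>Q. y \<in> ball q (2*r)}"
  have "real (card ?Q) * ((r/2) powr n / C) \<le> measure \<mu> (ball y (2*r + r/2))"
  proof (rule card_separated_le)
    show "?Q \<subseteq> ball y (2*r)" by (auto simp: dist_commute)
  qed (use assms R0 in auto)
  also have "\<dots> \<le> C * (5 * (r/2)) powr n"
    using upper[of "2*r + r/2" y] assms R0 by simp
  also have "\<dots> = (C^2 * 5 powr n) * ((r/2) powr n / C)"
    by (subst powr_mult) (use assms C1 in \<open>auto simp: power2_eq_square\<close>)
  finally show ?thesis
    by (rule mult_right_le_imp_le) (use assms C1 in simp)
qed

text \<open>Summing the energies of the doubled balls around a separated set counts every pair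
  of points at most \<open>C\<^sup>2 5\<^sup>n\<close> times.\<close>
lemma ball_energy_overlap_sum:
  fixes Q :: "'a set"
  assumes "finite Q" "\<And>p q. p\<in>Q \<Longrightarrow> q\<in>Q \<Longrightarrow> p \<noteq> q \<Longrightarrow> r \<le> dist p q" "0 < r" "r \<le> R0"
  shows "(\<Sum>q\<in>Q. ball_energy \<mu> u p s q (2*r))
    \<le> ennreal (C^2 * 5 powr n) * (\<integral>\<^sup>+ y. \<integral>\<^sup>+ z. ennreal (besov_kernel \<mu> u p s y z) \<partial>\<mu> \<partial>\<mu>)"
proof -
  let ?g = "\<lambda>y z. ennreal (besov_kernel \<mu> u p s y z)"
  let ?B = "\<lambda>q. ball q (2*r)"
  let ?M = "ennreal (C^2 * 5 powr n)"
  have pointwise: "(\<Sum>q\<in>Q. ?g y z * indicator (?B q) y * indicator (?B q) z) \<le> ?M * ?g y z" for y z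
  proof -
    let ?Q = "{q\<in>Q. y \<in> ?B q}"
    have "(\<Sum>q\<in>Q. ?g y z * indicator (?B q) y * indicator (?B q) z)
        \<le> (\<Sum>q\<in>?Q. ?g y z * indicator (?B q) y * indicator (?B q) z)"
      using assms(1) by (intro sum.mono_neutral_right[THEN eq_refl]) (simp_all add: indicator_def)
    also have "\<dots> \<le> of_nat (card ?Q) * ?g y z"
      using sum_mono[of ?Q _ "\<lambda>_. ?g y z"] by (simp add: indicator_def)
    also have "\<dots> \<le> ?M * ?g y z"
      using card_overlap_le[OF assms, of y]
      by (intro mult_right_mono) (simp_all add: ennreal_of_nat_eq_real_of_nat ennreal_leI)
    finally show ?thesis .
  qed
  have "(\<Sum>q\<in>Q. ball_energy \<mu> u p s q (2*r))
      \<le> (\<integral>\<^sup>+ y. (\<Sum>q\<in>Q. \<integral>\<^sup>+ z. ?g y z * indicator (?B q) y * indicator (?B q) z \<partial>\<mu>) \<partial>\<mu>)"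
    unfolding ball_energy_def by (rule nn_integral_superadd_sum[OF assms(1)])
  also have "\<dots> \<le> (\<integral>\<^sup>+ y. (\<integral>\<^sup>+ z. (\<Sum>q\<in>Q. ?g y z * indicator (?B q) y * indicator (?B q) z) \<partial>\<mu>) \<partial>\<mu>)"
    by (intro nn_integral_mono nn_integral_superadd_sum[OF assms(1)])
  also have "\<dots> \<le> (\<integral>\<^sup>+ y. ?M * (\<integral>\<^sup>+ z. ?g y z \<partial>\<mu>) \<partial>\<mu>)"
    by (intro nn_integral_mono order_trans[OF _ nn_integral_cmult_le] pointwise) simp_all
  also have "\<dots> \<le> ?M * (\<integral>\<^sup>+ y. (\<integral>\<^sup>+ z. ?g y z \<partial>\<mu>) \<partial>\<mu>)"
    by (intro nn_integral_cmult_le) simp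
  finally show ?thesis .
qed

lemma bad_balls_content:
  fixes N :: "nat \<Rightarrow> 'a set" and \<tau> :: real
  defines "\<theta> \<equiv> (1/2::real) powr \<tau>"
  assumes \<tau>: "0 < \<tau>"
    and sep: "\<And>k p q. p \<in> N k \<Longrightarrow> q \<in> N k \<Longrightarrow> p \<noteq> q \<Longrightarrow> dyadic R0 k \<le> dist p q"
    and F: "finite F" "F \<subseteq> {(k,q). K \<le> k \<and> q \<in> N k
              \<and> ennreal (dyadic R0 k powr \<tau>) < ball_energy \<mu> u p s q (2 * dyadic R0 k)}"
  shows "(\<Sum>kq\<in>F. ennreal (diameter (ball (snd kq) (dyadic R0 (fst kq))) powr (2*\<tau>)))
    \<le> ennreal (2 powr (2*\<tau>) * R0 powr \<tau> * \<theta>^K / (1 - \<theta>))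
       * (ennreal (C^2 * 5 powr n) * (\<integral>\<^sup>+ y. \<integral>\<^sup>+ z. ennreal (besov_kernel \<mu> u p s y z) \<partial>\<mu> \<partial>\<mu>))"
proof -
  let ?E = "\<lambda>k q. ball_energy \<mu> u p s q (2 * dyadic R0 k)"
  let ?w = "\<lambda>k. 2 powr (2*\<tau>) * dyadic R0 k powr \<tau>"
  let ?I = "ennreal (C^2 * 5 powr n) * (\<integral>\<^sup>+ y. \<integral>\<^sup>+ z. ennreal (besov_kernel \<mu> u p s y z) \<partial>\<mu> \<partial>\<mu>)"
  let ?F = "\<lambda>k. {q. (k,q) \<in> F}"
  have \<theta>: "0 \<le> \<theta>" "\<theta> < 1" unfolding \<theta>_def using half_powr_bounds[OF \<tau>] by auto
  have fin: "finite (?F k)" for k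
    using finite_subset[of "?F k" "snd ` F"] F(1) by force
  have "(\<Sum>kq\<in>F. ennreal (diameter (ball (snd kq) (dyadic R0 (fst kq))) powr (2*\<tau>)))
      \<le> (\<Sum>kq\<in>F. ennreal (?w (fst kq)) * ?E (fst kq) (snd kq))"
    using F(2) R0 \<tau> by (intro sum_mono diameter_ball_powr_le_energy) (auto intro: dyadic_pos)
  also have "\<dots> = (\<Sum>k\<in>fst ` F. \<Sum>q\<in>?F k. ennreal (?w k) * ?E k q)"
  proof -
    have "F = (SIGMA k:fst ` F. ?F k)" by force
    then show ?thesis using F(1) fin by (subst sum.Sigma) (auto simp: split_beta)
  qed
  also have "\<dots> = (\<Sum>k\<in>fst ` F. ennreal (?w k) * (\<Sum>q\<in>?F k. ?E k q))"
    by (simp add: sum_distrib_left)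
  also have "\<dots> \<le> (\<Sum>k\<in>fst ` F. ennreal (?w k) * ?I)"
  proof (intro sum_mono mult_left_mono ball_energy_overlap_sum fin)
    show "\<And>k p q. p \<in> ?F k \<Longrightarrow> q \<in> ?F k \<Longrightarrow> p \<noteq> q \<Longrightarrow> dyadic R0 k \<le> dist p q"
      using F(2) sep by blast
  qed (use R0 in \<open>auto intro: dyadic_pos dyadic_le\<close>)
  also have "\<dots> = ennreal (\<Sum>k\<in>fst ` F. ?w k) * ?I"
    by (simp add: sum_distrib_right[symmetric])
  also have "\<dots> \<le> ennreal (2 powr (2*\<tau>) * R0 powr \<tau> * \<theta>^K / (1 - \<theta>)) * ?I"
  proof (intro mult_right_mono ennreal_leI)
    have "(\<Sum>k\<in>fst ` F. ?w k) = 2 powr (2*\<tau>) * R0 powr \<tau> * (\<Sum>k\<in>fst ` F. \<theta>^k)"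
      using R0 by (simp add: dyadic_powr \<theta>_def sum_distrib_left mult.assoc)
    also have "\<dots> \<le> 2 powr (2*\<tau>) * R0 powr \<tau> * (\<theta>^K / (1 - \<theta>))"
      using F \<theta> by (intro mult_left_mono geometric_tail_bound) auto
    finally show "(\<Sum>k\<in>fst ` F. ?w k) \<le> 2 powr (2*\<tau>) * R0 powr \<tau> * \<theta>^K / (1 - \<theta>)" by simp
  qed simp
  finally show ?thesis .
qed

lemma energetic_points_content:
  fixes A :: "'a set"
  assumes \<tau>: "0 < \<tau>" and \<delta>: "2 * dyadic R0 K \<le> \<delta>"
    and A: "A \<subseteq> {x. \<exists>k\<ge>K. ennreal (dyadic R0 k powr \<tau>) < ball_energy \<mu> u p s x (dyadic R0 k)}"
  shows "hausdorff_pre (2*\<tau>) \<delta> A \<le> ennreal (2 powr (2*\<tau>) * R0 powr \<tau> * ((1/2) powr \<tau>)^K / (1 - (1/2) powr \<tau>))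
       * (ennreal (C^2 * 5 powr n) * (\<integral>\<^sup>+ y. \<integral>\<^sup>+ z. ennreal (besov_kernel \<mu> u p s y z) \<partial>\<mu> \<partial>\<mu>))"
proof -
  let ?r = "dyadic R0"
  obtain N :: "nat \<Rightarrow> 'a set" where sep: "\<And>k p q. p \<in> N k \<Longrightarrow> q \<in> N k \<Longrightarrow> p \<noteq> q \<Longrightarrow> ?r k \<le> dist p q"
    and net: "\<And>k x. \<exists>q\<in>N k. dist x q < ?r k" and count: "\<And>k. countable (N k)"
    by (metis dyadic_nets)
  define P where "P = {(k,q). K \<le> k \<and> q \<in> N k \<and> ennreal (?r k powr \<tau>) < ball_energy \<mu> u p s q (2 * ?r k)}"
  show ?thesis
  proof (rule hausdorff_pre_le_countable_cover[where B = "\<lambda>kq. ball (snd kq) (?r (fst kq))"])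
    show "countable P"
      by (rule countable_subset[of _ "SIGMA k:UNIV. N k"]) (auto simp: P_def intro: count)
    show "A \<subseteq> (\<Union>kq\<in>P. ball (snd kq) (?r (fst kq)))"
    proof
      fix x assume "x \<in> A"
      then obtain k where k: "K \<le> k" "ennreal (?r k powr \<tau>) < ball_energy \<mu> u p s x (?r k)"
        using A by auto
      obtain q where q: "q \<in> N k" "dist x q < ?r k" using net by blast
      with k order.strict_trans2[OF k(2) ball_energy_recentre[OF q(2)]]
      have "(k,q) \<in> P" unfolding P_def by auto
      then show "x \<in> (\<Union>kq\<in>P. ball (snd kq) (?r (fst kq)))"
        using q(2) by (intro UN_I[of "(k,q)"]) (auto simp: dist_commute)
    qed
    show "0 \<le> \<delta>" using \<delta> dyadic_pos[OF R0, of K] by simp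
    show "bounded (ball (snd kq) (?r (fst kq))) \<and> diameter (ball (snd kq) (?r (fst kq))) \<le> \<delta>"
      if "kq \<in> P" for kq
    proof -
      have "diameter (ball (snd kq) (?r (fst kq))) \<le> 2 * ?r (fst kq)"
        using diameter_ball_le dyadic_pos[OF R0] less_imp_le by blast
      also have "\<dots> \<le> \<delta>" using that dyadic_antimono[of R0 K "fst kq"] \<delta> R0 by (auto simp: P_def)
      finally show ?thesis by simp
    qed
    show "(\<Sum>kq\<in>F. ennreal (diameter (ball (snd kq) (?r (fst kq))) powr (2*\<tau>)))
      \<le> ennreal (2 powr (2*\<tau>) * R0 powr \<tau> * ((1/2) powr \<tau>)^K / (1 - (1/2) powr \<tau>))
       * (ennreal (C^2 * 5 powr n) * (\<integral>\<^sup>+ y. \<integral>\<^sup>+ z. ennreal (besov_kernel \<mu> u p s y z) \<partial>\<mu> \<partial>\<mu>))"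
      if "finite F" "F \<subseteq> P" for F
      using that by (intro bad_balls_content[OF \<tau> sep]) (auto simp: P_def)
  qed
qed

lemma energetic_points_null:
  fixes A :: "'a set"
  assumes I: "(\<integral>\<^sup>+ y. \<integral>\<^sup>+ z. ennreal (besov_kernel \<mu> u p s y z) \<partial>\<mu> \<partial>\<mu>) < \<infinity>" and \<tau>: "0 < \<tau>"
    and A: "A \<subseteq> {x. \<forall>K. \<exists>k\<ge>K. ennreal (dyadic R0 k powr \<tau>) < ball_energy \<mu> u p s x (dyadic R0 k)}"
  shows "hausdorff_measure (2*\<tau>) A = 0"
proof (rule hausdorff_measure_eq_zeroI)
  fix \<delta> :: real assume "0 < \<delta>"
  obtain I' where I': "(\<integral>\<^sup>+ y. \<integral>\<^sup>+ z. ennreal (besov_kernel \<mu> u p s y z) \<partial>\<mu> \<partial>\<mu>) = ennreal I'" "0 \<le> I'"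
    using I by (cases "\<integral>\<^sup>+ y. \<integral>\<^sup>+ z. ennreal (besov_kernel \<mu> u p s y z) \<partial>\<mu> \<partial>\<mu>") auto
  define \<theta> where "\<theta> = (1/2::real) powr \<tau>"
  have \<theta>: "0 \<le> \<theta>" "\<theta> < 1" unfolding \<theta>_def using half_powr_bounds[OF \<tau>] by auto
  define c where "c = 2 powr (2*\<tau>) * R0 powr \<tau> / (1 - \<theta>) * (C^2 * 5 powr n * I')"
  have "eventually (\<lambda>K. dyadic R0 K < \<delta> / 2) sequentially"
    using order_tendstoD(2)[OF dyadic_tendsto_zero, of "\<delta> / 2"] \<open>0 < \<delta>\<close> by simp
  then have "eventually (\<lambda>K. 2 * dyadic R0 K \<le> \<delta>) sequentially"
    by (rule eventually_mono) simp
  then have "eventually (\<lambda>K. hausdorff_pre (2*\<tau>) \<delta> A \<le> ennreal (c * \<theta>^K)) sequentially"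
  proof (rule eventually_mono)
    fix K assume "2 * dyadic R0 K \<le> \<delta>"
    moreover have "A \<subseteq> {x. \<exists>k\<ge>K. ennreal (dyadic R0 k powr \<tau>) < ball_energy \<mu> u p s x (dyadic R0 k)}"
      using A by auto
    ultimately have "hausdorff_pre (2*\<tau>) \<delta> A \<le> ennreal (2 powr (2*\<tau>) * R0 powr \<tau> * \<theta>^K / (1 - \<theta>))
        * (ennreal (C^2 * 5 powr n) * ennreal I')"
      unfolding I'(1)[symmetric] \<theta>_def by (rule energetic_points_content[OF \<tau>])
    also have "\<dots> = ennreal (c * \<theta>^K)"
      unfolding c_def using \<theta> C1 R0 I'(2) by (simp add: ennreal_mult[symmetric] mult_ac)
    finally show "hausdorff_pre (2*\<tau>) \<delta> A \<le> ennreal (c * \<theta>^K)" .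
  qed
  moreover have "(\<lambda>K. c * \<theta>^K) \<longlonglongrightarrow> 0"
    using tendsto_mult_left[OF LIMSEQ_power_zero, of \<theta> c] \<theta> by simp
  ultimately show "hausdorff_pre (2*\<tau>) \<delta> A = 0"
    by (rule ennreal_eq_zero_if_eventually_le)
qed

end

lemma oscillation_from_product_bound:
  fixes X m\<rho> mR lam \<kappa> E L P C :: real
  assumes "0 \<le> X" "0 < L" "L \<le> m\<rho>" "0 < P" "0 < C" "P / C \<le> mR" "mR \<le> C * P"
    and "0 \<le> lam" "0 \<le> \<kappa>" "0 \<le> E"
    and prod: "X * m\<rho> * mR \<le> lam * mR * mR + \<kappa> * E"
  shows "X \<le> lam * (C * P / L) + \<kappa> * E / (L * (P / C))"
proof -
  have mR: "0 < mR" using assms by (smt (verit) divide_pos_pos)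
  have "X * (L * mR) \<le> X * m\<rho> * mR"
    using assms mR by (simp add: mult_left_mono mult_right_mono mult.assoc[symmetric])
  with prod have "X \<le> (lam * mR * mR + \<kappa> * E) / (L * mR)"
    using assms mR by (simp add: pos_le_divide_eq)
  also have "\<dots> = lam * (mR / L) + \<kappa> * E / (L * mR)"
    using assms mR by (simp add: field_simps)
  also have "\<dots> \<le> lam * (C * P / L) + \<kappa> * E / (L * (P / C))"
    using assms mR by (intro add_mono mult_left_mono divide_right_mono divide_left_mono) auto
  finally show ?thesis .
qed

locale local_besov = local_ahlfors_regular +
  fixes u :: "'a::metric_space \<Rightarrow> real" and p s :: real
  assumes u_measurable[measurable]: "u \<in> borel_measurable \<mu>"
    and p1: "1 < p" and sp: "s * p = n"
    and locally_Lp: "\<And>x r. r > 0 \<Longrightarrow> (\<integral>\<^sup>+ y. ennreal (\<bar>u y\<bar> powr p) * indicator (ball x r) y \<partial>\<mu>) < \<infinity>"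
    and energy_finite: "(\<integral>\<^sup>+ y. \<integral>\<^sup>+ z. ennreal (besov_kernel \<mu> u p s y z) \<partial>\<mu> \<partial>\<mu>) < \<infinity>"
begin

text \<open>Since \<open>|t| \<le> 1 + |t|\<^sup>p\<close>, local \<open>L\<^sup>p\<close>-integrability gives integrability on balls.\<close>
lemma integrable_on_ball:
  assumes "0 < r"
  shows "integrable \<mu> (\<lambda>y. indicator (ball x r) y * u y)"
proof (rule integrableI_bounded)
  have bound: "\<bar>u y\<bar> \<le> 1 + \<bar>u y\<bar> powr p" for y
  proof (cases "\<bar>u y\<bar> \<le> 1")
    case False
    then have "\<bar>u y\<bar> powr 1 \<le> \<bar>u y\<bar> powr p" using p1 by (intro powr_mono) auto
    then show ?thesis using False by simp
  qed (use powr_ge_zero[of "\<bar>u y\<bar>" p] in linarith)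
  have "ennreal \<bar>u y\<bar> \<le> 1 + ennreal (\<bar>u y\<bar> powr p)" for y
    using ennreal_leI[OF bound[of y]] by (simp add: ennreal_plus)
  then have "ennreal (norm (indicator (ball x r) y * u y))
      \<le> indicator (ball x r) y + ennreal (\<bar>u y\<bar> powr p) * indicator (ball x r) y" for y
    by (simp add: indicator_def)
  then have "(\<integral>\<^sup>+ y. ennreal (norm (indicator (ball x r) y * u y)) \<partial>\<mu>)
      \<le> (\<integral>\<^sup>+ y. indicator (ball x r) y + ennreal (\<bar>u y\<bar> powr p) * indicator (ball x r) y \<partial>\<mu>)"
    by (intro nn_integral_mono)
  also have "\<dots> = emeasure \<mu> (ball x r) + (\<integral>\<^sup>+ y. ennreal (\<bar>u y\<bar> powr p) * indicator (ball x r) y \<partial>\<mu>)"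
    by (subst nn_integral_add) auto
  also have "\<dots> < \<infinity>" using finite_ball[OF assms] locally_Lp[OF assms] by simp
  finally show "(\<integral>\<^sup>+ y. ennreal (norm (indicator (ball x r) y * u y)) \<partial>\<mu>) < \<infinity>" .
qed measurable

lemma ball_avg_deviation:
  assumes r: "0 < r" "r \<le> 4*R0"
  shows "ennreal (\<bar>c - ball_avg \<mu> u x r\<bar> * measure \<mu> (ball x r))
    \<le> (\<integral>\<^sup>+ z. ennreal \<bar>c - u z\<bar> * indicator (ball x r) z \<partial>\<mu>)"
proof -
  let ?m = "measure \<mu> (ball x r)"
  let ?f = "\<lambda>z. indicator (ball x r) z * (c - u z)"
  have m: "0 < ?m" using measure_ball_pos[OF r] .
  have int: "integrable \<mu> (\<lambda>z. indicator (ball x r) z * u z)" by (rule integrable_on_ball[OF r(1)])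
  have ind: "integrable \<mu> (\<lambda>z. c * indicator (ball x r) z :: real)"
    using finite_ball[OF r(1)] by (intro integrable_mult_right) auto
  have f_eq: "?f = (\<lambda>z. c * indicator (ball x r) z - indicator (ball x r) z * u z)"
    by (auto simp: algebra_simps)
  have "(\<integral> z. ?f z \<partial>\<mu>) = c * ?m - (\<integral> z. indicator (ball x r) z * u z \<partial>\<mu>)"
    unfolding f_eq using int ind by simp
  also have "\<dots> = (c - ball_avg \<mu> u x r) * ?m"
    using m unfolding ball_avg_def set_lebesgue_integral_def by (simp add: field_simps)
  finally have "ennreal (\<bar>c - ball_avg \<mu> u x r\<bar> * ?m) = ennreal (norm (\<integral> z. ?f z \<partial>\<mu>))"
    using m by (simp add: abs_mult)
  also have "\<dots> \<le> (\<integral>\<^sup>+ z. norm (?f z) \<partial>\<mu>)"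
    by (rule integral_norm_bound_ennreal) (use int ind in \<open>simp add: f_eq\<close>)
  also have "\<dots> = (\<integral>\<^sup>+ z. ennreal \<bar>c - u z\<bar> * indicator (ball x r) z \<partial>\<mu>)"
    by (intro nn_integral_cong) (auto simp: indicator_def)
  finally show ?thesis .
qed

lemma ball_avg_difference:
  assumes "0 < \<rho>" "\<rho> \<le> R" "R \<le> 4*R0"
  shows "ennreal (\<bar>ball_avg \<mu> u x \<rho> - ball_avg \<mu> u x R\<bar> * measure \<mu> (ball x \<rho>) * measure \<mu> (ball x R))
    \<le> (\<integral>\<^sup>+ y. \<integral>\<^sup>+ z. ennreal \<bar>u y - u z\<bar> * indicator (ball x R) y * indicator (ball x R) z \<partial>\<mu> \<partial>\<mu>)"
proof -
  let ?a = "ball_avg \<mu> u x R"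
  let ?mR = "measure \<mu> (ball x R)"
  have R: "0 < R" "R \<le> 4*R0" and r: "0 < \<rho>" "\<rho> \<le> 4*R0" using assms by auto
  have mR: "0 < ?mR" using measure_ball_pos[OF R] .
  have "ennreal (\<bar>ball_avg \<mu> u x \<rho> - ?a\<bar> * measure \<mu> (ball x \<rho>) * ?mR)
      = ennreal (\<bar>?a - ball_avg \<mu> u x \<rho>\<bar> * measure \<mu> (ball x \<rho>)) * ennreal ?mR"
    using mR by (simp add: ennreal_mult[symmetric] abs_minus_commute)
  also have "\<dots> \<le> (\<integral>\<^sup>+ z. ennreal \<bar>?a - u z\<bar> * indicator (ball x \<rho>) z \<partial>\<mu>) * ennreal ?mR"
    by (intro mult_right_mono ball_avg_deviation[OF r]) simp
  also have "\<dots> \<le> (\<integral>\<^sup>+ z. ennreal \<bar>?a - u z\<bar> * indicator (ball x R) z \<partial>\<mu>) * ennreal ?mR"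
    using assms by (intro mult_right_mono nn_integral_mono) (auto simp: indicator_def)
  also have "\<dots> = (\<integral>\<^sup>+ z. ennreal (\<bar>u z - ?a\<bar> * ?mR) * indicator (ball x R) z \<partial>\<mu>)"
    using mR by (subst nn_integral_multc[symmetric])
      (auto intro!: nn_integral_cong simp: ennreal_mult abs_minus_commute mult_ac)
  also have "\<dots> \<le> (\<integral>\<^sup>+ z. (\<integral>\<^sup>+ w. ennreal \<bar>u z - u w\<bar> * indicator (ball x R) w \<partial>\<mu>) * indicator (ball x R) z \<partial>\<mu>)"
    by (intro nn_integral_mono mult_right_mono ball_avg_deviation[OF R]) simp
  also have "\<dots> = (\<integral>\<^sup>+ y. \<integral>\<^sup>+ z. ennreal \<bar>u y - u z\<bar> * indicator (ball x R) y * indicator (ball x R) z \<partial>\<mu> \<partial>\<mu>)"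
    by (intro nn_integral_cong, subst nn_integral_multc[symmetric]) (auto intro!: nn_integral_cong simp: mult_ac)
  finally show ?thesis .
qed

text \<open>Where two points of a ball \<open>B(x,R)\<close> have values differing by more than \<open>\<lambda>\<close>, the
  difference is dominated by the Besov kernel, because \<open>d(y,z)\<^sup>s\<^sup>p V(y,z) \<lesssim> R\<^sup>2\<^sup>n\<close>
  by Ahlfors regularity (here \<open>sp = n\<close> is used).\<close>
lemma large_difference_le_kernel:
  assumes R: "0 < R" "R \<le> R0" and lam: "0 < lam"
    and yz: "y \<in> ball x R" "z \<in> ball x R" "lam < \<bar>u y - u z\<bar>"
  shows "\<bar>u y - u z\<bar> \<le> C * (2*R) powr (2*n) / lam powr (p - 1) * besov_kernel \<mu> u p s y z"
proof -
  define d where "d = dist y z"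
  have "y \<noteq> z" using yz lam by auto
  then have d: "0 < d" "d < 2*R" using yz dist_triangle3[of y z x] unfolding d_def by auto
  have V: "0 < V \<mu> y z" "V \<mu> y z \<le> C * d powr n"
    unfolding V_def d_def[symmetric] using measure_ball_pos[of d y] upper[of d y] d R by auto
  have "d powr (s*p) * V \<mu> y z \<le> d powr n * (C * d powr n)"
    unfolding sp using V d by (intro mult_left_mono) auto
  also have "\<dots> = C * (d powr n * d powr n)" by simp
  also have "\<dots> \<le> C * ((2*R) powr n * (2*R) powr n)"
    using C1 d npos by (intro mult_left_mono mult_mono powr_mono2) auto
  also have "\<dots> = C * (2*R) powr (2*n)" by (simp add: powr_add[symmetric])
  finally have "d powr (s*p) * V \<mu> y z \<le> C * (2*R) powr (2*n)" .
  then show ?thesis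
    using above_threshold_le_power[OF lam yz(3) p1, of "d powr (s*p) * V \<mu> y z"] V d
    unfolding besov_kernel_def d_def by simp
qed

lemma large_differences_le_energy:
  assumes R: "0 < R" "R \<le> R0" and lam: "0 < lam"
  shows "(\<integral>\<^sup>+ y. \<integral>\<^sup>+ z. ennreal (if \<bar>u y - u z\<bar> \<le> lam then 0 else \<bar>u y - u z\<bar>)
      * indicator (ball x R) y * indicator (ball x R) z \<partial>\<mu> \<partial>\<mu>)
    \<le> ennreal (C * (2*R) powr (2*n) / lam powr (p - 1)) * ball_energy \<mu> u p s x R"
    (is "(\<integral>\<^sup>+ y. \<integral>\<^sup>+ z. ?f y z \<partial>\<mu> \<partial>\<mu>) \<le> ennreal ?\<kappa> * _")
proof -
  let ?B = "ball x R"
  let ?g = "\<lambda>y z. ennreal (besov_kernel \<mu> u p s y z) * indicator ?B y * indicator ?B z"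
  have "?f y z \<le> ennreal ?\<kappa> * ?g y z" for y z
  proof (cases "y \<in> ?B \<and> z \<in> ?B \<and> lam < \<bar>u y - u z\<bar>")
    case True
    then have "ennreal \<bar>u y - u z\<bar> \<le> ennreal (?\<kappa> * besov_kernel \<mu> u p s y z)"
      by (intro ennreal_leI large_difference_le_kernel[OF R lam, where x = x]) simp_all
    also have "\<dots> = ennreal ?\<kappa> * ennreal (besov_kernel \<mu> u p s y z)"
      using C1 lam besov_kernel_nonneg by (intro ennreal_mult) auto
    finally show ?thesis using True by simp
  qed (auto simp: indicator_def)
  then have "(\<integral>\<^sup>+ y. \<integral>\<^sup>+ z. ?f y z \<partial>\<mu> \<partial>\<mu>) \<le> (\<integral>\<^sup>+ y. \<integral>\<^sup>+ z. ennreal ?\<kappa> * ?g y z \<partial>\<mu> \<partial>\<mu>)"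
    by (intro nn_integral_mono)
  also have "\<dots> \<le> (\<integral>\<^sup>+ y. ennreal ?\<kappa> * (\<integral>\<^sup>+ z. ?g y z \<partial>\<mu>) \<partial>\<mu>)"
    by (intro nn_integral_mono nn_integral_cmult_le) simp
  also have "\<dots> \<le> ennreal ?\<kappa> * ball_energy \<mu> u p s x R"
    unfolding ball_energy_def by (intro nn_integral_cmult_le) simp
  finally show ?thesis .
qed

text \<open>Splitting pairs according to whether \<open>|u y - u z| \<le> \<lambda>\<close>: the small differences contribute
  at most \<open>\<lambda> \<mu>(B)\<^sup>2\<close>, the large ones are dominated by the energy of the ball.\<close>
lemma mean_oscillation_split:
  assumes R: "0 < R" "R \<le> R0" and lam: "0 < lam"
  shows "(\<integral>\<^sup>+ y. \<integral>\<^sup>+ z. ennreal \<bar>u y - u z\<bar> * indicator (ball x R) y * indicator (ball x R) z \<partial>\<mu> \<partial>\<mu>)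
    \<le> ennreal (lam * measure \<mu> (ball x R) * measure \<mu> (ball x R))
      + ennreal (C * (2*R) powr (2*n) / lam powr (p - 1)) * ball_energy \<mu> u p s x R"
proof -
  let ?B = "ball x R"
  let ?a = "\<lambda>y z. \<bar>u y - u z\<bar>"
  let ?\<kappa> = "C * (2*R) powr (2*n) / lam powr (p - 1)"
  define f1 where "f1 y z = ennreal (if ?a y z \<le> lam then ?a y z else 0) * indicator ?B y * indicator ?B z" for y z
  define f2 where "f2 y z = ennreal (if ?a y z \<le> lam then 0 else ?a y z) * indicator ?B y * indicator ?B z" for y z
  have [measurable]: "(\<lambda>(y,z). f1 y z) \<in> borel_measurable (\<mu> \<Otimes>\<^sub>M \<mu>)" "(\<lambda>(y,z). f2 y z) \<in> borel_measurable (\<mu> \<Otimes>\<^sub>M \<mu>)"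
    "f1 y \<in> borel_measurable \<mu>" "f2 y \<in> borel_measurable \<mu>" for y
    unfolding f1_def f2_def by measurable
  have I1: "(\<lambda>y. \<integral>\<^sup>+ z. f1 y z \<partial>\<mu>) \<in> borel_measurable \<mu>" and I2: "(\<lambda>y. \<integral>\<^sup>+ z. f2 y z \<partial>\<mu>) \<in> borel_measurable \<mu>"
    by (rule sigma_finite_measure.borel_measurable_nn_integral[OF sigma_finite], simp)+
  have "(\<integral>\<^sup>+ y. \<integral>\<^sup>+ z. ennreal (?a y z) * indicator ?B y * indicator ?B z \<partial>\<mu> \<partial>\<mu>)
      = (\<integral>\<^sup>+ y. \<integral>\<^sup>+ z. f1 y z + f2 y z \<partial>\<mu> \<partial>\<mu>)"
    unfolding f1_def f2_def by (intro nn_integral_cong) (auto simp: indicator_def)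
  also have "\<dots> = (\<integral>\<^sup>+ y. (\<integral>\<^sup>+ z. f1 y z \<partial>\<mu>) + (\<integral>\<^sup>+ z. f2 y z \<partial>\<mu>) \<partial>\<mu>)"
    by (intro nn_integral_cong nn_integral_add) simp_all
  also have "\<dots> = (\<integral>\<^sup>+ y. \<integral>\<^sup>+ z. f1 y z \<partial>\<mu> \<partial>\<mu>) + (\<integral>\<^sup>+ y. \<integral>\<^sup>+ z. f2 y z \<partial>\<mu> \<partial>\<mu>)"
    by (rule nn_integral_add[OF I1 I2])
  also have "\<dots> \<le> ennreal (lam * measure \<mu> ?B * measure \<mu> ?B) + ennreal ?\<kappa> * ball_energy \<mu> u p s x R"
  proof (rule add_mono)
    have "(\<integral>\<^sup>+ y. \<integral>\<^sup>+ z. f1 y z \<partial>\<mu> \<partial>\<mu>) \<le> (\<integral>\<^sup>+ y. \<integral>\<^sup>+ z. (ennreal lam * indicator ?B y) * indicator ?B z \<partial>\<mu> \<partial>\<mu>)"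
      unfolding f1_def by (intro nn_integral_mono) (auto simp: indicator_def)
    also have "\<dots> = (\<integral>\<^sup>+ y. (ennreal lam * emeasure \<mu> ?B) * indicator ?B y \<partial>\<mu>)"
      by (intro nn_integral_cong) (subst nn_integral_cmult_indicator, simp, simp add: mult_ac)
    also have "\<dots> = ennreal lam * emeasure \<mu> ?B * emeasure \<mu> ?B"
      by (simp add: nn_integral_cmult_indicator)
    also have "\<dots> = ennreal (lam * measure \<mu> ?B * measure \<mu> ?B)"
      using finite_ball[OF R(1)] lam by (simp add: emeasure_eq_ennreal_measure less_top ennreal_mult)
    finally show "(\<integral>\<^sup>+ y. \<integral>\<^sup>+ z. f1 y z \<partial>\<mu> \<partial>\<mu>) \<le> ennreal (lam * measure \<mu> ?B * measure \<mu> ?B)" .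
  next
    show "(\<integral>\<^sup>+ y. \<integral>\<^sup>+ z. f2 y z \<partial>\<mu> \<partial>\<mu>) \<le> ennreal ?\<kappa> * ball_energy \<mu> u p s x R"
      unfolding f2_def by (rule large_differences_le_energy[OF R lam])
  qed
  finally show ?thesis .
qed

text \<open>If the energy of \<open>B(x,R)\<close> is at most \<open>R\<^sup>\<tau>\<close>, then averages over \<open>B(x,\<rho>)\<close>,
  \<open>R/2 \<le> \<rho> \<le> R\<close>, differ from the average over \<open>B(x,R)\<close> by \<open>O(R\<^sup>\<tau>\<^sup>/\<^sup>p)\<close>; this follows by
  choosing the threshold \<open>\<lambda> = R\<^sup>\<tau>\<^sup>/\<^sup>p\<close> in the splitting above.\<close>
lemma ball_avg_oscillation:
  assumes R: "0 < R" "R \<le> R0" and \<rho>: "R/2 \<le> \<rho>" "\<rho> \<le> R" and \<tau>: "0 < \<tau>"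
    and E: "ball_energy \<mu> u p s x R \<le> ennreal (R powr \<tau>)"
  shows "\<bar>ball_avg \<mu> u x \<rho> - ball_avg \<mu> u x R\<bar> \<le> (C^2 * 2 powr n + C^3 * 2 powr (3*n)) * R powr (\<tau>/p)"
proof -
  define X where "X = \<bar>ball_avg \<mu> u x \<rho> - ball_avg \<mu> u x R\<bar>"
  define lam where "lam = R powr (\<tau>/p)"
  define \<kappa> where "\<kappa> = C * (2*R) powr (2*n) / lam powr (p - 1)"
  define m\<rho> where "m\<rho> = measure \<mu> (ball x \<rho>)"
  define mR where "mR = measure \<mu> (ball x R)"
  define P where "P = R powr n"
  define L where "L = P / 2 powr n / C"
  have pos: "0 < P" "0 < C" "0 < lam" "0 < \<rho>" "0 < L" "0 < mR" "0 \<le> \<kappa>"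
    using R \<rho> C1 measure_ball_pos[of R x] R0
    by (auto simp: P_def lam_def L_def mR_def \<kappa>_def)
  have "L = (R/2) powr n / C" unfolding L_def P_def using R by (simp add: powr_divide)
  also have "\<dots> \<le> \<rho> powr n / C"
    using \<rho> R npos pos by (intro divide_right_mono powr_mono2) auto
  also have "\<dots> \<le> m\<rho>" unfolding m\<rho>_def using pos \<rho> R R0 by (intro lower) auto
  finally have Lle: "L \<le> m\<rho>" .
  have mR: "P / C \<le> mR" "mR \<le> C * P"
    unfolding mR_def P_def using R R0 lower[of R x] upper[of R x] by auto
  have "ennreal (X * m\<rho> * mR) \<le> ennreal (lam * mR * mR) + ennreal \<kappa> * ball_energy \<mu> u p s x R"
    unfolding X_def m\<rho>_def mR_def \<kappa>_def
    using ball_avg_difference[OF pos(4) \<rho>(2), of x] mean_oscillation_split[OF R pos(3), of x] R R0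
    by (auto intro: order_trans)
  also have "\<dots> \<le> ennreal (lam * mR * mR + \<kappa> * R powr \<tau>)"
    using E pos by (simp add: ennreal_plus ennreal_mult mult_left_mono)
  finally have "X * m\<rho> * mR \<le> lam * mR * mR + \<kappa> * R powr \<tau>"
    using pos by (subst (asm) ennreal_le_iff) auto
  then have "X \<le> lam * (C * P / L) + \<kappa> * R powr \<tau> / (L * (P / C))"
    by (rule oscillation_from_product_bound[rotated -1]) (use pos Lle mR in \<open>auto simp: X_def\<close>)
  also have "lam * (C * P / L) = C^2 * 2 powr n * R powr (\<tau>/p)"
    unfolding L_def lam_def using pos by (simp add: field_simps power2_eq_square)
  also have "\<kappa> * R powr \<tau> / (L * (P / C)) = C^3 * 2 powr (3*n) * R powr (\<tau>/p)"
  proof -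
    have "(2*R) powr (2*n) = 2 powr (2*n) * P * P"
      unfolding P_def using R by (simp add: powr_mult powr_add[symmetric])
    moreover have "R powr \<tau> = R powr (\<tau>/p) * lam powr (p - 1)"
      unfolding lam_def using R p1 by (simp add: powr_powr powr_add[symmetric] field_simps)
    moreover have "2 powr (3*n) = 2 powr (2*n) * 2 powr n" by (simp add: powr_add[symmetric])
    ultimately show ?thesis unfolding \<kappa>_def L_def using pos
      by (simp add: field_simps power2_eq_square power3_eq_cube)
  qed
  finally show ?thesis unfolding X_def by (simp add: algebra_simps)
qed

lemma ball_avg_converges_if_energy_decays:
  assumes \<tau>: "0 < \<tau>"
    and decay: "\<And>k. K0 \<le> k \<Longrightarrow> ball_energy \<mu> u p s x (dyadic R0 k) \<le> ennreal (dyadic R0 k powr \<tau>)"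
  shows "\<exists>L. ((\<lambda>r. ball_avg \<mu> u x r) \<longlongrightarrow> L) (at_right 0)"
proof -
  define \<theta> where "\<theta> = (1/2::real) powr (\<tau>/p)"
  define D where "D = (C^2 * 2 powr n + C^3 * 2 powr (3*n)) * R0 powr (\<tau>/p)"
  have \<theta>: "0 \<le> \<theta>" "\<theta> < 1" unfolding \<theta>_def using half_powr_bounds[of "\<tau>/p"] \<tau> p1 by auto
  show ?thesis
  proof (rule dyadic_limit_at_right[OF R0 \<theta>])
    show "0 \<le> D" unfolding D_def using C1 by simp
    fix k \<rho> assume k: "K0 \<le> k" and \<rho>: "dyadic R0 k / 2 \<le> \<rho>" "\<rho> \<le> dyadic R0 k"
    have "\<bar>ball_avg \<mu> u x \<rho> - ball_avg \<mu> u x (dyadic R0 k)\<bar>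
        \<le> (C^2 * 2 powr n + C^3 * 2 powr (3*n)) * dyadic R0 k powr (\<tau>/p)"
      using R0 by (intro ball_avg_oscillation \<rho> \<tau> decay k dyadic_pos dyadic_le) auto
    also have "\<dots> = D * \<theta>^k" using R0 unfolding D_def \<theta>_def by (simp add: dyadic_powr)
    finally show "\<bar>ball_avg \<mu> u x \<rho> - ball_avg \<mu> u x (dyadic R0 k)\<bar> \<le> D * \<theta>^k" .
  qed
qed

lemma ball_avg_converges_off_dimension_zero:
  "hausdorff_dim_zero (UNIV - {x. \<exists>L. ((\<lambda>r. ball_avg \<mu> u x r) \<longlongrightarrow> L) (at_right 0)})"
  unfolding hausdorff_dim_zero_def
proof (intro allI impI)
  fix t :: real assume t: "0 < t"
  let ?F = "{x. \<exists>L. ((\<lambda>r. ball_avg \<mu> u x r) \<longlongrightarrow> L) (at_right 0)}"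
  have "UNIV - ?F \<subseteq> {x. \<forall>K. \<exists>k\<ge>K. ennreal (dyadic R0 k powr (t/2)) < ball_energy \<mu> u p s x (dyadic R0 k)}"
  proof (rule subsetI, rule ccontr)
    fix x assume "x \<in> UNIV - ?F"
      and "x \<notin> {x. \<forall>K. \<exists>k\<ge>K. ennreal (dyadic R0 k powr (t/2)) < ball_energy \<mu> u p s x (dyadic R0 k)}"
    then show False using ball_avg_converges_if_energy_decays[of "t/2" _ x] t by (auto simp: not_less)
  qed
  from energetic_points_null[OF energy_finite _ this] t
  show "hausdorff_measure t (UNIV - ?F) = 0" by simp
qed

end

text \<open>On a space with two distinct points, Ahlfors regularity holds at all scales
  \<open>r \<le> 4 R\<^sub>0\<close> for a suitable \<open>R\<^sub>0 > 0\<close> (below a quarter of the diameter if the space is bounded).\<close>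
lemma local_ahlfors_regular_if_ahlfors_regular:
  fixes \<mu> :: "'a::metric_space measure" and x1 y1 :: 'a
  assumes "mm_space \<mu>" "ahlfors_regular \<mu> n" "n > 0" "x1 \<noteq> y1"
  obtains C R0 where "local_ahlfors_regular \<mu> C R0 n"
proof -
  from assms(2) obtain C where C1: "C \<ge> 1" and AR: "\<And>x r. 0 < r
      \<Longrightarrow> (\<not> bounded (UNIV::'a set) \<or> r < 2 * diameter (UNIV::'a set))
      \<Longrightarrow> r powr n / C \<le> measure \<mu> (ball x r) \<and> measure \<mu> (ball x r) \<le> C * r powr n"
    unfolding ahlfors_regular_def by blast
  obtain R0 where R0: "0 < R0"
    and scales: "\<And>r. r \<le> 4*R0 \<Longrightarrow> \<not> bounded (UNIV::'a set) \<or> r < 2 * diameter (UNIV::'a set)"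
  proof (cases "bounded (UNIV::'a set)")
    case True
    have "0 < dist x1 y1" using assms(4) by simp
    also have "dist x1 y1 \<le> diameter (UNIV::'a set)" by (rule diameter_bounded_bound[OF True]) auto
    finally show ?thesis by (intro that[of "diameter (UNIV::'a set) / 4"]) auto
  qed (use that[of 1] in auto)
  have "local_ahlfors_regular \<mu> C R0 n"
    using assms(1,3) C1 R0 AR scales unfolding mm_space_def by unfold_locales auto
  then show ?thesis by (rule that)
qed

lemma local_besov_if_besov:
  assumes "local_ahlfors_regular \<mu> C R0 n" "0 < s" "s < n" "u \<in> besov \<mu> s (n / s)"
  shows "local_besov \<mu> C R0 n u (n / s) s"
proof -
  interpret local_ahlfors_regular \<mu> C R0 n by fact
  show ?thesis
    using assms(2-4) unfolding besov_def Lp_loc_def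
    by unfold_locales (auto simp: besov_kernel_def)
qed

lemma ball_avg_converges_on_singleton:
  fixes \<mu> :: "'a::metric_space measure"
  assumes "\<And>x y::'a. x = y"
  shows "\<exists>L. ((\<lambda>r. ball_avg \<mu> u x r) \<longlongrightarrow> L) (at_right 0)"
proof -
  have "ball x r = {x}" if "0 < r" for r
  proof (rule set_eqI)
    fix z :: 'a
    have "z = x" by (rule assms)
    then show "z \<in> ball x r \<longleftrightarrow> z \<in> {x}" using that by simp
  qed
  then have "eventually (\<lambda>r. ball_avg \<mu> u x r = ball_avg \<mu> u x 1) (at_right 0)"
    unfolding ball_avg_def eventually_at_right_field by (intro exI[of _ 1]) auto
  then show ?thesis by (intro exI[of _ "ball_avg \<mu> u x 1"]) (simp add: tendsto_eventually)
qed

theorem lemma5p2: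
  fixes \<mu> :: "'a::metric_space measure" and n s :: real and u :: "'a \<Rightarrow> real"
  assumes "mm_space \<mu>" and "ahlfors_regular \<mu> n" and "n > 0"
    and "0 < s" and "s < n"
    and "u \<in> besov \<mu> s (n / s)"
  shows "\<exists>F. hausdorff_dim_zero (UNIV - F) \<and>
           (\<forall>x\<in>F. \<exists>L. ((\<lambda>r. ball_avg \<mu> u x r) \<longlongrightarrow> L) (at_right 0))"
proof -
  define F where "F = {x. \<exists>L. ((\<lambda>r. ball_avg \<mu> u x r) \<longlongrightarrow> L) (at_right 0)}"
  have "hausdorff_dim_zero (UNIV - F)"
  proof (cases "\<exists>x1 y1::'a. x1 \<noteq> y1")
    case True
    then obtain x1 y1 :: 'a where "x1 \<noteq> y1" by blast
    then obtain C R0 where "local_ahlfors_regular \<mu> C R0 n"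
      by (rule local_ahlfors_regular_if_ahlfors_regular[OF assms(1-3)])
    then have "local_besov \<mu> C R0 n u (n / s) s"
      using local_besov_if_besov assms(4-6) by blast
    then show ?thesis unfolding F_def by (rule local_besov.ball_avg_converges_off_dimension_zero)
  next
    case False
    then have "F = UNIV" unfolding F_def using ball_avg_converges_on_singleton by blast
    then show ?thesis by (simp add: hausdorff_dim_zero_def hausdorff_measure_empty)
  qed
  then show ?thesis unfolding F_def by blast
qed

end
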